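(* If $(A_n)_{n=0}^\infty$ is an Appell sequence, then $A_n^{**}=A_n$ for all $n\geq0$.
   Context: An Appell sequence is a sequence of polynomials $(A_n)_{n\ge0}$ with $A_0=1$ and $A_n'=nA_{n-1}$ for $n\ge1$. For a partition $\lambda$ of length $r$, let $(n_1,\dots,n_r)=(\lambda_r,\lambda_{r-1}+1,\dots,\lambda_1+r-1)$ and $A_\lambda=\operatorname{Wr}[A_{n_1},\dots,A_{n_r}]/\Delta(n_1,\dots,n_r)$, where $\operatorname{Wr}$ is the Wronskian and $\Delta$ the Vandermonde determinant $\prod_{i<j}(x_j-x_i)$. The dual sequence $A^*$ is defined by $A^*_n=A_{(1^n)}$, with $(1^n)=(1,\dots,1)$ ($n$ ones); it is again an Appell sequence, and $A^{**}=(A^* )^*$. *)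

theory Defs
  imports "HOL-Computational_Algebra.Polynomial" "Jordan_Normal_Form.Determinant"
begin

definition appell :: "(nat \<Rightarrow> complex poly) \<Rightarrow> bool" where
  "appell A \<longleftrightarrow> A 0 = 1 \<and> (\<forall>n\<ge>1. pderiv (A n) = smult (of_nat n) (A (n - 1)))"

definition wronskian :: "complex poly list \<Rightarrow> complex poly" where
  "wronskian fs = det (mat (length fs) (length fs) (\<lambda>(i, j). (pderiv ^^ i) (fs ! j)))"

definition vandermonde :: "int list \<Rightarrow> int" where
  "vandermonde xs = (\<Prod>(i, j) \<in> {(i, j). i < j \<and> j < length xs}. xs ! j - xs ! i)"

definition is_partition :: "nat list \<Rightarrow> bool" where
  "is_partition lam \<longleftrightarrow> sorted_wrt (\<ge>) lam \<and> (\<forall>x\<in>set lam. x > 0)"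

text \<open>(n_1,...,n_r) = (lambda_r, lambda_{r-1}+1, ..., lambda_1+r-1), 0-indexed.\<close>
definition part_degrees :: "nat list \<Rightarrow> nat list" where
  "part_degrees lam = map (\<lambda>i. lam ! (length lam - 1 - i) + i) [0..<length lam]"

definition appell_part :: "(nat \<Rightarrow> complex poly) \<Rightarrow> nat list \<Rightarrow> complex poly" where
  "appell_part A lam =
     smult (inverse (of_int (vandermonde (map int (part_degrees lam)))))
           (wronskian (map A (part_degrees lam)))"

definition appell_dual :: "(nat \<Rightarrow> complex poly) \<Rightarrow> nat \<Rightarrow> complex poly" where
  "appell_dual A n = appell_part A (replicate n 1)"

end

theory Submission
  imports Defs
begin

text \<open>Put B_k = A_k / k!, so that B_k' = B_(k-1). The (i,j) entry of the Wronskian of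
  A_1, ..., A_n is (j+1)! B_(j+1-i); pulling the factorials out of the columns and dividing by
  the Vandermonde determinant 0! 1! ... (n-1)! gives A*_n / n! = C_n, the Toeplitz-Hessenberg
  determinant det (B_(j+1-i)). Expanding it along the first column yields
  sum_k (-1)^k B_k C_(n-k) = [n = 0], i.e. (sum_k (-1)^k B_k t^k) (sum_k C_k t^k) = 1.
  Replacing t by -t shows that this relation is symmetric in B and C, so B \<mapsto> C is an
  involution. Differentiating the relation gives C_k' = C_(k-1), so A* is again Appell and the
  dual can be taken twice.\<close>

definition hess_entry :: "(nat \<Rightarrow> 'a::comm_ring_1) \<Rightarrow> nat \<Rightarrow> nat \<Rightarrow> 'a" where
  "hess_entry B i j = (if i \<le> Suc j then B (Suc j - i) else 0)"

definition hess_mat :: "(nat \<Rightarrow> 'a::comm_ring_1) \<Rightarrow> nat \<Rightarrow> 'a mat" where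
  "hess_mat B n = mat n n (\<lambda>(i, j). hess_entry B i j)"

definition hess_det :: "(nat \<Rightarrow> 'a::comm_ring_1) \<Rightarrow> nat \<Rightarrow> 'a" where
  "hess_det B n = det (hess_mat B n)"

text \<open>Deleting row 1 and column 0 of this matrix leaves a matrix of the same shape, with the
  first row shifted; this makes the first-column expansion an induction.\<close>
definition hess_row_mat :: "(nat \<Rightarrow> 'a::comm_ring_1) \<Rightarrow> (nat \<Rightarrow> 'a) \<Rightarrow> nat \<Rightarrow> 'a mat" where
  "hess_row_mat B v n = mat n n (\<lambda>(i, j). if i = 0 then v j else hess_entry B i j)"

lemma hess_det_0 [simp]: "hess_det B 0 = 1"
  unfolding hess_det_def hess_mat_def by (rule det_dim_zero) auto

lemma hess_row_mat_shift: "hess_row_mat B (\<lambda>j. B (Suc j)) n = hess_mat B n"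
  unfolding hess_row_mat_def hess_mat_def by (rule cong_mat) (auto simp: hess_entry_def)

lemma det_hess_row_mat_Suc:
  assumes B0: "B 0 = 1"
  shows "det (hess_row_mat B v (Suc n)) =
    v 0 * hess_det B n - (if n = 0 then 0 else det (hess_row_mat B (\<lambda>j. v (Suc j)) n))"
proof -
  let ?G = "hess_row_mat B v (Suc n)"
  have car: "?G \<in> carrier_mat (Suc n) (Suc n)" unfolding hess_row_mat_def by auto
  have minor0: "mat_delete ?G 0 0 = hess_mat B n"
    unfolding hess_row_mat_def hess_mat_def mat_delete_def
    by (rule eq_matI) (auto simp: hess_entry_def)
  have "det ?G = (\<Sum>i<Suc n. ?G $$ (i, 0) * cofactor ?G i 0)"
    by (rule laplace_expansion_column[OF car]) auto
  also have "\<dots> = ?G $$ (0, 0) * cofactor ?G 0 0 + (\<Sum>i<n. ?G $$ (Suc i, 0) * cofactor ?G (Suc i) 0)"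
    by (rule sum.lessThan_Suc_shift)
  finally have expand: "det ?G = v 0 * hess_det B n + (\<Sum>i<n. ?G $$ (Suc i, 0) * cofactor ?G (Suc i) 0)"
    using minor0 by (simp add: cofactor_def hess_row_mat_def hess_det_def)
  show ?thesis
  proof (cases n)
    case 0
    then show ?thesis using expand by simp
  next
    case (Suc m)
    have minor1: "mat_delete ?G 1 0 = hess_row_mat B (\<lambda>j. v (Suc j)) n"
      unfolding hess_row_mat_def mat_delete_def by (rule eq_matI) (auto simp: hess_entry_def)
    have "(\<Sum>i<n. ?G $$ (Suc i, 0) * cofactor ?G (Suc i) 0)
       = ?G $$ (1, 0) * cofactor ?G 1 0 + (\<Sum>i<m. ?G $$ (Suc (Suc i), 0) * cofactor ?G (Suc (Suc i)) 0)"
      unfolding Suc by (subst sum.lessThan_Suc_shift) simp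
    also have "(\<Sum>i<m. ?G $$ (Suc (Suc i), 0) * cofactor ?G (Suc (Suc i)) 0) = 0"
      by (rule sum.neutral) (auto simp: hess_row_mat_def hess_entry_def Suc)
    also have "?G $$ (1, 0) * cofactor ?G 1 0 = - det (hess_row_mat B (\<lambda>j. v (Suc j)) n)"
      using minor1 by (simp add: cofactor_def hess_row_mat_def hess_entry_def B0 Suc)
    finally show ?thesis using expand Suc by simp
  qed
qed

lemma det_hess_row_mat:
  assumes B0: "B 0 = 1" and "n \<ge> 1"
  shows "det (hess_row_mat B v n) = (\<Sum>j<n. (-1)^j * v j * hess_det B (n - 1 - j))"
  using assms(2)
proof (induction n arbitrary: v)
  case 0
  then show ?case by simp
next
  case (Suc n)
  show ?case
  proof (cases n)
    case 0
    then show ?thesis using det_hess_row_mat_Suc[of B v 0, OF B0] by simp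
  next
    case (Suc m)
    have "det (hess_row_mat B v (Suc n)) =
        v 0 * hess_det B n - (\<Sum>j<n. (-1)^j * v (Suc j) * hess_det B (n - 1 - j))"
      using det_hess_row_mat_Suc[of B v n, OF B0] Suc.IH[of "\<lambda>j. v (Suc j)"] Suc by simp
    also have "\<dots> = (\<Sum>j<Suc n. (-1)^j * v j * hess_det B (Suc n - 1 - j))"
      by (subst sum.lessThan_Suc_shift) (simp add: sum_negf[symmetric])
    finally show ?thesis .
  qed
qed

lemma hess_det_recurrence:
  assumes "B 0 = 1" and "n \<ge> 1"
  shows "hess_det B n = (\<Sum>j<n. (-1)^j * B (Suc j) * hess_det B (n - 1 - j))"
  using det_hess_row_mat[of B n "\<lambda>j. B (Suc j)", OF assms]
  unfolding hess_row_mat_shift hess_det_def[symmetric] .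

definition alt_conv :: "(nat \<Rightarrow> 'a::comm_ring_1) \<Rightarrow> (nat \<Rightarrow> 'a) \<Rightarrow> nat \<Rightarrow> 'a" where
  "alt_conv B X n = (\<Sum>k\<le>n. (-1)^k * B k * X (n - k))"

lemma alt_conv_Suc:
  assumes "B 0 = 1"
  shows "alt_conv B X (Suc n) = X (Suc n) - (\<Sum>k\<le>n. (-1)^k * B (Suc k) * X (n - k))"
  unfolding alt_conv_def
  by (subst sum.atMost_Suc_shift) (simp add: assms sum_negf[symmetric])

lemma alt_conv_hess_det:
  assumes B0: "B 0 = 1"
  shows "alt_conv B (hess_det B) n = (if n = 0 then 1 else 0)"
proof (cases n)
  case 0
  then show ?thesis by (simp add: alt_conv_def B0)
next
  case (Suc m)
  then show ?thesis
    using hess_det_recurrence[of B "Suc m", OF B0]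
    by (simp add: alt_conv_Suc[of B, OF B0] lessThan_Suc_atMost)
qed

lemma alt_conv_commute: "alt_conv C B n = (-1)^n * alt_conv B C n"
proof -
  have "alt_conv B C n = (\<Sum>k\<le>n. (-1)^(n - k) * B (n - k) * C k)"
    unfolding alt_conv_def atMost_atLeast0
    by (subst sum.atLeastAtMost_rev) (auto intro!: sum.cong)
  also have "(-1)^n * \<dots> = (\<Sum>k\<le>n. (-1)^k * C k * B (n - k))"
    unfolding sum_distrib_left
  proof (rule sum.cong)
    fix k assume "k \<in> {..n}"
    then have "(-1::'a)^n * (-1)^(n - k) = (-1)^k"
      by (metis (no_types) atMost_iff le_add_diff_inverse minus_one_mult_self mult.right_neutral
          power_add mult.assoc)
    then show "(-1)^n * ((-1)^(n - k) * B (n - k) * C k) = (-1)^k * C k * B (n - k)"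
      by (metis (no_types, lifting) mult.assoc mult.commute)
  qed simp
  finally show ?thesis by (simp add: alt_conv_def)
qed

lemma alt_conv_cancel:
  assumes B0: "B 0 = 1" and eq: "\<And>n. alt_conv B X n = alt_conv B Y n"
  shows "X = Y"
proof
  fix n show "X n = Y n"
  proof (induction n rule: less_induct)
    case (less n)
    show ?case
    proof (cases n)
      case 0
      then show ?thesis using eq[of 0] by (simp add: alt_conv_def B0)
    next
      case (Suc m)
      have "(\<Sum>k\<le>m. (-1)^k * B (Suc k) * X (m - k)) = (\<Sum>k\<le>m. (-1)^k * B (Suc k) * Y (m - k))"
        by (rule sum.cong) (auto simp: less.IH Suc)
      then show ?thesis using eq[of n] unfolding Suc alt_conv_Suc[of B, OF B0] by simp
    qed
  qed
qed

lemma hess_det_involutive: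
  assumes B0: "B 0 = 1"
  shows "hess_det (hess_det B) = B"
proof (rule alt_conv_cancel)
  show "hess_det B 0 = 1" by simp
  fix n
  show "alt_conv (hess_det B) (hess_det (hess_det B)) n = alt_conv (hess_det B) B n"
    using alt_conv_hess_det[of "hess_det B" n] alt_conv_hess_det[of B, OF B0]
    by (simp add: alt_conv_commute[of "hess_det B" B])
qed

definition appell_divided :: "(nat \<Rightarrow> 'a::idom poly) \<Rightarrow> bool" where
  "appell_divided B \<longleftrightarrow> B 0 = 1 \<and> (\<forall>k. pderiv (B (Suc k)) = B k)"

lemma higher_pderiv_appell_divided:
  assumes "appell_divided B"
  shows "(pderiv ^^ i) (B m) = (if i \<le> m then B (m - i) else 0)"
proof (induction i)
  case 0
  then show ?case by simp
next
  case (Suc i)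
  have "pderiv (B (Suc (m - Suc i))) = B (m - Suc i)" and "pderiv (B 0) = 0"
    using assms by (simp_all add: appell_divided_def)
  then show ?case using Suc by (auto simp: Suc_diff_Suc le_Suc_eq)
qed

lemma pderiv_alt_conv_Suc:
  assumes "appell_divided B" and "pderiv (X 0) = 0"
  shows "pderiv (alt_conv B X (Suc n)) = alt_conv B (\<lambda>k. pderiv (X (Suc k))) n - alt_conv B X n"
proof -
  have B: "B 0 = 1" "\<And>k. pderiv (B (Suc k)) = B k"
    using assms(1) by (simp_all add: appell_divided_def)
  have "pderiv (alt_conv B X (Suc n)) =
      (\<Sum>k\<le>Suc n. (-1)^k * pderiv (B k) * X (Suc n - k)) +
      (\<Sum>k\<le>Suc n. (-1)^k * B k * pderiv (X (Suc n - k)))"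
    unfolding alt_conv_def higher_pderiv_sum[of 1, simplified] sum.distrib[symmetric]
    by (rule sum.cong) (simp_all add: pderiv_mult pderiv_power pderiv_minus algebra_simps)
  also have "(\<Sum>k\<le>Suc n. (-1)^k * pderiv (B k) * X (Suc n - k)) = - alt_conv B X n"
    unfolding alt_conv_def by (subst sum.atMost_Suc_shift) (simp add: B sum_negf[symmetric])
  also have "(\<Sum>k\<le>Suc n. (-1)^k * B k * pderiv (X (Suc n - k))) = alt_conv B (\<lambda>k. pderiv (X (Suc k))) n"
    unfolding alt_conv_def using assms(2)
    by (subst sum.atMost_Suc) (auto intro!: sum.cong simp: Suc_diff_le)
  finally show ?thesis by simp
qed

lemma appell_divided_hess_det:
  assumes "appell_divided B"
  shows "appell_divided (hess_det B)"
proof -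
  have B0: "B 0 = 1" using assms by (simp add: appell_divided_def)
  have "alt_conv B (\<lambda>k. pderiv (hess_det B (Suc k))) n = alt_conv B (hess_det B) n" for n
    using pderiv_alt_conv_Suc[OF assms, of "hess_det B" n] alt_conv_hess_det[of B, OF B0] by simp
  then have "(\<lambda>k. pderiv (hess_det B (Suc k))) = hess_det B"
    by (rule alt_conv_cancel[of B, OF B0])
  then show ?thesis by (simp add: appell_divided_def fun_eq_iff)
qed

definition divide_fact :: "(nat \<Rightarrow> 'a::field_char_0 poly) \<Rightarrow> nat \<Rightarrow> 'a poly" where
  "divide_fact A k = smult (inverse (fact k)) (A k)"

lemma smult_fact_divide_fact [simp]: "smult (fact k) (divide_fact A k) = A k"
  by (simp add: divide_fact_def)

lemma appell_iff_appell_divided: "appell A \<longleftrightarrow> appell_divided (divide_fact A)"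
proof -
  have step: "pderiv (A (Suc m)) = smult (of_nat (Suc m)) (A m) \<longleftrightarrow>
      pderiv (divide_fact A (Suc m)) = divide_fact A m" for m
  proof -
    let ?c = "inverse (fact (Suc m)) :: complex"
    have "?c \<noteq> 0" by (simp del: fact_Suc)
    then have cancel: "smult ?c p = smult ?c q \<longleftrightarrow> p = q" for p q
      by (metis smult_cancel)
    have "divide_fact A m = smult ?c (smult (of_nat (Suc m)) (A m))"
      by (simp add: divide_fact_def field_simps del: of_nat_Suc)
    moreover have "pderiv (divide_fact A (Suc m)) = smult ?c (pderiv (A (Suc m)))"
      by (simp add: divide_fact_def pderiv_smult)
    ultimately show ?thesis by (simp only: cancel)
  qed
  have "(\<forall>n\<ge>1. P n) \<longleftrightarrow> (\<forall>m. P (Suc m))" for P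
    by (metis Suc_le_D Suc_le_mono le0 One_nat_def)
  then show ?thesis
    unfolding appell_def appell_divided_def using step by (simp add: divide_fact_def)
qed

lemma vandermonde_prod: "(\<Prod>(i, j)\<in>{(i, j). i < j \<and> j < (n::nat)}. int j - int i) = (\<Prod>j<n. fact j)"
proof (induction n)
  case 0
  then show ?case by simp
next
  case (Suc n)
  have split: "{(i, j). i < j \<and> j < Suc n} = {(i, j). i < j \<and> j < n} \<union> (\<lambda>i. (i, n)) ` {..<n}"
    by auto
  have fin: "finite {(i, j). i < j \<and> j < (n::nat)}"
    by (rule finite_subset[of _ "{..<n} \<times> {..<n}"]) auto
  have "(\<Prod>(i, j)\<in>(\<lambda>i. (i, n)) ` {..<n}. int j - int i) = (\<Prod>i<n. int (Suc (n - Suc i)))"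
    by (subst prod.reindex) (auto simp: inj_on_def intro!: prod.cong)
  also have "\<dots> = (\<Prod>i<n. int (Suc i))"
    by (rule prod.nat_diff_reindex)
  also have "\<dots> = fact n"
    by (simp add: fact_prod_Suc atLeast0LessThan)
  finally have last_col: "(\<Prod>(i, j)\<in>(\<lambda>i. (i, n)) ` {..<n}. int j - int i) = fact n" .
  show ?case
    unfolding split using Suc last_col fin by (subst prod.union_disjoint) auto
qed

lemma vandermonde_upt_Suc: "vandermonde (map int (map Suc [0..<n])) = (\<Prod>j<n. fact j)"
proof -
  have "vandermonde (map int (map Suc [0..<n])) = (\<Prod>(i, j)\<in>{(i, j). i < j \<and> j < n}. int j - int i)"
    unfolding vandermonde_def by (rule prod.cong) auto
  then show ?thesis using vandermonde_prod by simp
qed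

lemma part_degrees_replicate_one: "part_degrees (replicate n 1) = map Suc [0..<n]"
  unfolding part_degrees_def by (rule nth_equalityI) auto

lemma det_mat_scale_cols:
  fixes f :: "nat \<Rightarrow> nat \<Rightarrow> 'a::comm_ring_1"
  shows "det (mat n n (\<lambda>(i, j). f i j * d j)) = (\<Prod>j<n. d j) * det (mat n n (\<lambda>(i, j). f i j))"
proof -
  have "det (mat n n (\<lambda>(i, j). f i j * d j)) =
      (\<Sum>p\<in>{p. p permutes {0..<n}}. signof p * (\<Prod>i=0..<n. f i (p i) * d (p i)))"
    by (subst det_def'[of _ n]) auto
  also have "\<dots> = (\<Sum>p\<in>{p. p permutes {0..<n}}. (\<Prod>j<n. d j) * (signof p * (\<Prod>i=0..<n. f i (p i))))"
  proof (rule sum.cong)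
    fix p assume "p \<in> {p. p permutes {0..<n}}"
    then have "(\<Prod>i=0..<n. d (p i)) = (\<Prod>i=0..<n. d i)"
      using prod.permute[of p "{0..<n}" d] by (simp add: comp_def)
    then show "signof p * (\<Prod>i=0..<n. f i (p i) * d (p i)) =
        (\<Prod>j<n. d j) * (signof p * (\<Prod>i=0..<n. f i (p i)))"
      by (simp add: prod.distrib atLeast0LessThan mult_ac)
  qed simp
  also have "\<dots> = (\<Prod>j<n. d j) * det (mat n n (\<lambda>(i, j). f i j))"
    by (subst det_def'[of _ n]) (auto simp: sum_distrib_left)
  finally show ?thesis .
qed

lemma wronskian_appell_upt_Suc:
  assumes "appell A"
  shows "wronskian (map A (map Suc [0..<n])) = smult (\<Prod>j<n. fact (Suc j)) (hess_det (divide_fact A) n)"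
proof -
  have B: "appell_divided (divide_fact A)"
    using assms appell_iff_appell_divided by blast
  have entry: "(pderiv ^^ i) (A (Suc j)) = hess_entry (divide_fact A) i j * [:fact (Suc j):]" for i j
  proof -
    have "(pderiv ^^ i) (A (Suc j)) = smult (fact (Suc j)) ((pderiv ^^ i) (divide_fact A (Suc j)))"
      by (metis higher_pderiv_smult smult_fact_divide_fact)
    then show ?thesis
      by (simp add: higher_pderiv_appell_divided[OF B] hess_entry_def del: fact_Suc)
  qed
  have "wronskian (map A (map Suc [0..<n])) =
      det (mat n n (\<lambda>(i, j). hess_entry (divide_fact A) i j * [:fact (Suc j):]))"
    unfolding wronskian_def by (rule arg_cong[where f = det], rule cong_mat) (auto simp: entry)
  also have "\<dots> = [:\<Prod>j<n. fact (Suc j):] * hess_det (divide_fact A) n"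
    unfolding det_mat_scale_cols hess_det_def hess_mat_def prod_to_poly ..
  finally show ?thesis by simp
qed

lemma divide_fact_appell_dual:
  assumes "appell A"
  shows "divide_fact (appell_dual A) = hess_det (divide_fact A)"
proof
  fix n
  have prods: "(\<Prod>j<n. fact (Suc j) :: complex) = fact n * (\<Prod>j<n. fact j)"
    by (induction n) (simp_all add: algebra_simps)
  have "(\<Prod>j<n. fact j :: complex) \<noteq> 0" by simp
  then have "appell_dual A n = smult (fact n) (hess_det (divide_fact A) n)"
    unfolding appell_dual_def appell_part_def part_degrees_replicate_one vandermonde_upt_Suc
      wronskian_appell_upt_Suc[OF assms] prods
    by (simp add: of_int_prod field_simps)
  then show "divide_fact (appell_dual A) n = hess_det (divide_fact A) n"
    by (simp add: divide_fact_def)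
qed

lemma appell_appell_dual:
  assumes "appell A"
  shows "appell (appell_dual A)"
  using assms appell_divided_hess_det
  by (simp add: appell_iff_appell_divided divide_fact_appell_dual)

theorem corollary5p6:
  fixes A :: "nat \<Rightarrow> complex poly"
  assumes "appell A"
  shows "\<forall>n. appell_dual (appell_dual A) n = A n"
proof
  fix n
  have "divide_fact (appell_dual (appell_dual A)) = hess_det (hess_det (divide_fact A))"
    using assms by (simp add: divide_fact_appell_dual appell_appell_dual)
  also have "\<dots> = divide_fact A"
    using assms by (intro hess_det_involutive) (simp add: appell_def divide_fact_def)
  finally have "divide_fact (appell_dual (appell_dual A)) n = divide_fact A n" by simp
  then show "appell_dual (appell_dual A) n = A n"
    by (metis smult_fact_divide_fact)
qed

end
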